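(* Let $p$ be a prime. Let $M$ be a matroid over $\mathbb{Z}/p\mathbb{Z}$ and $N$ a sparse paving matroid over $\mathbb{Z}/p\mathbb{Z}$, both of the same rank $n$, such that either (1) $E(M)$ is not a progression and $|E(M)|=|E(N)|-1$, or (2) $E(M)$ is neither a progression nor a semi-progression and $|E(M)|=|E(N)|$. If $0\notin E(N)$, then $M$ is matched to $N$.
   Context: A matroid over an abelian group $G$ is a matroid $M$ whose finite ground set $E(M)$ is a subset of $G$; all matroids are assumed loopless. A matroid of rank $n$ is paving if every $(n-1)$-element subset of its ground set is independent; it is sparse paving if both it and its dual matroid are paving. A progression of length $k$ with difference $x$ and initial term $a$ is a set $\{a,a+x,\dots,a+(k-1)x\}$; a set $A$ is a semi-progression if $A\setminus\{a\}$ is a progression for some $a\in A$. For matroids $M,N$ over $G$ with $r(M)=r(N)=n>0$ and bases $\mathcal{M}=\{a_1,\dots,a_n\}$ of $M$ and $\mathcal{N}=\{b_1,\dots,b_n\}$ of $N$, $\mathcal{M}$ is matched to $\mathcal{N}$ if there is a permutation $\pi\in S_n$ with $a_i+b_{\pi(i)}\notin E(M)$ for all $i$. $M$ is matched to $N$ if for every basis $\mathcal{M}$ of $M$ there exists a basis $\mathcal{N}$ of $N$ such that $\mathcal{M}$ is matched to $\mathcal{N}$. *)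

theory Defs
  imports Main "HOL-Computational_Algebra.Primes"
begin

text \<open>Z/pZ is represented by the integers 0..p-1 with addition modulo p.
A matroid over Z/pZ is given by its finite ground set E (a subset of {0..<p})
and its set of bases (basis axioms).\<close>

definition is_matroid :: "int set \<Rightarrow> int set set \<Rightarrow> bool" where
  "is_matroid E \<B> \<longleftrightarrow> finite E \<and> \<B> \<noteq> {} \<and> (\<forall>B\<in>\<B>. B \<subseteq> E) \<and>
     (\<forall>B1\<in>\<B>. \<forall>B2\<in>\<B>. \<forall>x\<in>B1 - B2. \<exists>y\<in>B2 - B1. insert y (B1 - {x}) \<in> \<B>)"

definition loopless :: "int set \<Rightarrow> int set set \<Rightarrow> bool" where
  "loopless E \<B> \<longleftrightarrow> (\<forall>e\<in>E. \<exists>B\<in>\<B>. e \<in> B)"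

definition matroid_over_Zp :: "int \<Rightarrow> int set \<Rightarrow> int set set \<Rightarrow> bool" where
  "matroid_over_Zp p E \<B> \<longleftrightarrow> is_matroid E \<B> \<and> loopless E \<B> \<and> E \<subseteq> {0..<p}"

definition has_rank :: "int set set \<Rightarrow> nat \<Rightarrow> bool" where
  "has_rank \<B> n \<longleftrightarrow> (\<forall>B\<in>\<B>. card B = n)"

definition indep :: "int set set \<Rightarrow> int set \<Rightarrow> bool" where
  "indep \<B> X \<longleftrightarrow> (\<exists>B\<in>\<B>. X \<subseteq> B)"

definition dual_bases :: "int set \<Rightarrow> int set set \<Rightarrow> int set set" where
  "dual_bases E \<B> = (\<lambda>B. E - B) ` \<B>"

definition paving :: "int set \<Rightarrow> int set set \<Rightarrow> nat \<Rightarrow> bool" where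
  "paving E \<B> n \<longleftrightarrow> (\<forall>X. X \<subseteq> E \<and> card X = n - 1 \<longrightarrow> indep \<B> X)"

definition sparse_paving :: "int set \<Rightarrow> int set set \<Rightarrow> nat \<Rightarrow> bool" where
  "sparse_paving E \<B> n \<longleftrightarrow> paving E \<B> n \<and> paving E (dual_bases E \<B>) (card E - n)"

definition progression :: "int \<Rightarrow> int set \<Rightarrow> bool" where
  "progression p A \<longleftrightarrow> (\<exists>a x. \<exists>k::nat. A = {(a + int i * x) mod p | i. i < k})"

definition semi_progression :: "int \<Rightarrow> int set \<Rightarrow> bool" where
  "semi_progression p A \<longleftrightarrow> (\<exists>a\<in>A. progression p (A - {a}))"

text \<open>Basis BM of M (ground set EM) matched to basis BN: a bijection f : BM \<rightarrow> BN
with a + f a \<notin> E(M) for all a (this is the permutation in the definition).\<close>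
definition basis_matched :: "int \<Rightarrow> int set \<Rightarrow> int set \<Rightarrow> int set \<Rightarrow> bool" where
  "basis_matched p EM BM BN \<longleftrightarrow>
     (\<exists>f. bij_betw f BM BN \<and> (\<forall>a\<in>BM. (a + f a) mod p \<notin> EM))"

definition matroid_matched :: "int \<Rightarrow> int set \<Rightarrow> int set set \<Rightarrow> int set set \<Rightarrow> bool" where
  "matroid_matched p EM \<B>M \<B>N \<longleftrightarrow>
     (\<forall>BM\<in>\<B>M. \<exists>BN\<in>\<B>N. basis_matched p EM BM BN)"

end

theory Submission
  imports Defs
begin

text \<open>Fix a basis \<open>S\<close> of \<open>M\<close> and call \<open>b \<in> E(N)\<close> a partner of \<open>a \<in> S\<close> if \<open>a + b \<notin> E(M)\<close>.
  For \<open>U \<subseteq> S\<close>, the points of \<open>E(N)\<close> that are partners of no \<open>a \<in> U\<close> lie in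
  \<open>T(U) = {x. U + x \<subseteq> E(M)}\<close>. Since \<open>T(U) + U \<subseteq> E(M)\<close>, the Cauchy--Davenport theorem bounds
  \<open>|T(U)| + |U| \<le> |E(M)| + 1\<close>, and since \<open>0 \<in> T(U)\<close> but \<open>0 \<notin> E(N)\<close>, the set \<open>U\<close> has at least
  \<open>|E(N)| - |E(M)| + |U| \<ge> |U|\<close> partners. By Hall's theorem \<open>S\<close> is matched injectively onto an
  \<open>n\<close>-subset \<open>X\<close> of \<open>E(N)\<close>. If \<open>X\<close> is not a basis but some point has an unused partner \<open>y\<close>,
  sparse paving makes the exchanged set \<open>X - {f a} \<union> {y}\<close> a basis. Otherwise all the inequalities
  above are equalities for \<open>U = S\<close>: then \<open>X\<close> is a basis when \<open>n = 1\<close> or \<open>T(S) = {0}\<close>, and in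
  the remaining case \<open>(T(S), S)\<close> is a critical pair, so Vosper's theorem makes \<open>E(M) = T(S) + S\<close>
  an arithmetic progression.\<close>

lemma obtain_two_distinct:
  assumes "2 \<le> card S"
  obtains x y where "x \<in> S" "y \<in> S" "x \<noteq> y"
proof -
  have "finite S" "\<not> card S \<le> Suc 0" using assms by (auto intro: card_ge_0_finite)
  then show thesis using that card_le_Suc0_iff_eq by blast
qed

lemma two_le_card:
  assumes "finite S" "x \<in> S" "y \<in> S" "x \<noteq> y"
  shows "2 \<le> card S"
proof -
  have "card {x, y} \<le> card S" using assms by (intro card_mono) auto
  then show ?thesis using assms(4) by simp
qed

lemma bij_betw_fun_upd_exchange:
  assumes "inj_on f S" "a \<in> S" "y \<notin> f ` S"
  shows "bij_betw (f(a := y)) S (insert y (f ` S - {f a}))"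
proof -
  have "f(a := y) ` S = insert y (f ` (S - {a}))" by (simp only: fun_upd_image assms(2) if_True)
  also have "f ` (S - {a}) = f ` S - {f a}" using assms(1,2) by (simp add: inj_on_image_set_diff)
  finally show ?thesis unfolding bij_betw_def using inj_on_fun_updI[OF assms(1,3)] by blast
qed

lemma card_add_card_Diff_ge:
  assumes "finite E" "finite T" "x \<in> T" "x \<notin> E"
  shows "card E + 1 \<le> card (E - T) + card T"
proof -
  have "card (E \<inter> T) \<le> card (T - {x})" using assms by (intro card_mono) auto
  moreover have "card E = card (E \<inter> T) + card (E - T)" using assms(1) by (rule card_Int_Diff)
  moreover have "card T > 0" using assms(2,3) by (auto simp: card_gt_0_iff)
  ultimately show ?thesis using assms(2,3) by (simp add: card_Diff_singleton)
qed

section \<open>Hall's marriage theorem\<close>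

definition hall_condition :: "'i set \<Rightarrow> ('i \<Rightarrow> 'b set) \<Rightarrow> bool" where
  "hall_condition I A \<longleftrightarrow> (\<forall>J\<subseteq>I. card J \<le> card (\<Union>(A ` J)))"

definition has_sdr :: "'i set \<Rightarrow> ('i \<Rightarrow> 'b set) \<Rightarrow> bool" where
  "has_sdr I A \<longleftrightarrow> (\<exists>f. inj_on f I \<and> (\<forall>i\<in>I. f i \<in> A i))"

lemma has_sdr_combine:
  assumes "J \<subseteq> I" "inj_on f J" "\<forall>i\<in>J. f i \<in> A i \<inter> U"
    and "has_sdr (I - J) (\<lambda>i. A i - U)"
  shows "has_sdr I A"
proof -
  obtain g where g: "inj_on g (I - J)" "\<forall>i\<in>I - J. g i \<in> A i - U"
    using assms(4) unfolding has_sdr_def by blast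
  define h where "h i = (if i \<in> J then f i else g i)" for i
  have "inj_on h (J \<union> (I - J))"
  proof (subst inj_on_Un, intro conjI)
    show "inj_on h J" using assms(2) by (simp add: h_def inj_on_def)
    show "inj_on h (I - J)" using g(1) by (simp add: h_def inj_on_def)
    show "h ` (J - (I - J)) \<inter> h ` (I - J - J) = {}" using assms(3) g(2) by (auto simp: h_def)
  qed
  moreover have "\<forall>i\<in>I. h i \<in> A i" using assms(3) g(2) by (auto simp: h_def)
  ultimately show ?thesis using assms(1) unfolding has_sdr_def by (metis Un_Diff_cancel sup.absorb2)
qed

lemma hall_condition_remove_tight:
  assumes hall: "hall_condition I A" and fin: "finite I" "\<forall>i. finite (A i)"
    and J: "J \<subseteq> I" "card (\<Union>(A ` J)) = card J"
  shows "hall_condition (I - J) (\<lambda>i. A i - \<Union>(A ` J))"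
  unfolding hall_condition_def
proof (intro allI impI)
  fix K assume K: "K \<subseteq> I - J"
  have fin_KJ: "finite (K \<union> J)" using K J(1) fin(1) finite_subset by blast
  have "card K + card J = card (K \<union> J)"
    using K fin_KJ by (subst card_Un_disjoint) auto
  also have "\<dots> \<le> card (\<Union>(A ` (K \<union> J)))"
    using hall K J(1) unfolding hall_condition_def by (meson Diff_subset le_sup_iff order_trans)
  also have "\<dots> = card (\<Union>(A ` (K \<union> J)) - \<Union>(A ` J)) + card J"
  proof -
    have "card (\<Union>(A ` J)) \<le> card (\<Union>(A ` (K \<union> J)))"
      using fin_KJ fin(2) by (intro card_mono) auto
    then show ?thesis
      using fin_KJ fin(2) J(2) by (subst card_Diff_subset) auto
  qed
  finally show "card K \<le> card (\<Union>((\<lambda>i. A i - \<Union>(A ` J)) ` K))"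
    by (simp add: image_Un Un_Diff)
qed

lemma hall_condition_remove_slack:
  assumes fin: "finite I" "\<forall>i. finite (A i)"
    and slack: "\<forall>J. J \<subseteq> I \<and> J \<noteq> {} \<and> J \<noteq> I \<longrightarrow> card J < card (\<Union>(A ` J))"
    and i: "i \<in> I"
  shows "hall_condition (I - {i}) (\<lambda>j. A j - {x})"
  unfolding hall_condition_def
proof (intro allI impI)
  fix K assume K: "K \<subseteq> I - {i}"
  show "card K \<le> card (\<Union>((\<lambda>j. A j - {x}) ` K))"
  proof (cases "K = {}")
    case False
    have "finite K" using K fin(1) finite_subset by blast
    then have "card (\<Union>(A ` K)) \<le> card (\<Union>(A ` K) - {x}) + 1"
      using fin(2) by (cases "x \<in> \<Union>(A ` K)") (simp_all add: card_Diff_singleton)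
    moreover have "card K < card (\<Union>(A ` K))" using slack K False i by blast
    ultimately show ?thesis by simp
  qed simp
qed

theorem hall_marriage:
  assumes "finite I" "\<forall>i. finite (A i)" "hall_condition I A"
  shows "has_sdr I A"
  using assms
proof (induction "card I" arbitrary: I A rule: less_induct)
  case (less I A)
  show ?case
  proof (cases "\<exists>J. J \<subseteq> I \<and> J \<noteq> {} \<and> J \<noteq> I \<and> card (\<Union>(A ` J)) = card J")
    case True
    then obtain J where J: "J \<subseteq> I" "J \<noteq> {}" "J \<noteq> I" "card (\<Union>(A ` J)) = card J" by blast
    have fin_J: "finite J" using J(1) less.prems(1) finite_subset by blast
    have "has_sdr J A"
    proof (rule less.hyps)
      show "card J < card I" using J less.prems(1) by (meson psubsetI psubset_card_mono)
      show "hall_condition J A" using less.prems(3) J(1) unfolding hall_condition_def by blast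
    qed (use fin_J less.prems(2) in auto)
    then obtain f where f: "inj_on f J" "\<forall>i\<in>J. f i \<in> A i" unfolding has_sdr_def by blast
    have "has_sdr (I - J) (\<lambda>i. A i - \<Union>(A ` J))"
    proof (rule less.hyps)
      have "I - J \<subset> I" using J(1,2) by blast
      then show "card (I - J) < card I" using less.prems(1) by (rule psubset_card_mono[rotated])
      show "hall_condition (I - J) (\<lambda>i. A i - \<Union>(A ` J))"
        using hall_condition_remove_tight[OF less.prems(3,1,2) J(1,4)] .
    qed (use less.prems(1,2) in auto)
    then show ?thesis using has_sdr_combine[OF J(1) f(1)] f(2) by blast
  next
    case False
    show ?thesis
    proof (cases "I = {}")
      case True
      then show ?thesis unfolding has_sdr_def by simp
    next
      case nonempty: False
      then obtain i where i: "i \<in> I" by blast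
      have "card {i} \<le> card (A i)" using less.prems(3) i unfolding hall_condition_def by force
      then obtain x where x: "x \<in> A i" by fastforce
      have slack: "\<forall>J. J \<subseteq> I \<and> J \<noteq> {} \<and> J \<noteq> I \<longrightarrow> card J < card (\<Union>(A ` J))"
      proof (intro allI impI)
        fix J assume J: "J \<subseteq> I \<and> J \<noteq> {} \<and> J \<noteq> I"
        then have "card J \<le> card (\<Union>(A ` J))" using less.prems(3) unfolding hall_condition_def by blast
        moreover have "card (\<Union>(A ` J)) \<noteq> card J" using False J by blast
        ultimately show "card J < card (\<Union>(A ` J))" by linarith
      qed
      have "has_sdr (I - {i}) (\<lambda>j. A j - {x})"
      proof (rule less.hyps)
        show "card (I - {i}) < card I" using less.prems(1) i by (rule card_Diff1_less)
        show "hall_condition (I - {i}) (\<lambda>j. A j - {x})"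
          using hall_condition_remove_slack[OF less.prems(1,2) slack i] .
      qed (use less.prems(1,2) in auto)
      then show ?thesis
        using has_sdr_combine[of "{i}" I "\<lambda>_. x" A "{x}"] i x by simp
    qed
  qed
qed

lemma indep_extends_to_basis_within:
  assumes matroid: "is_matroid E Bs" and B0: "B0 \<in> Bs" "B0 \<subseteq> Z"
    and I: "I \<subseteq> Z" "indep Bs I"
  shows "\<exists>B\<in>Bs. I \<subseteq> B \<and> B \<subseteq> Z"
proof -
  obtain B where B: "B \<in> Bs" "I \<subseteq> B" using I(2) unfolding indep_def by blast
  then show ?thesis
  proof (induction "card (B - Z)" arbitrary: B rule: less_induct)
    case (less B)
    show ?case
    proof (cases "B \<subseteq> Z")
      case False
      then obtain x where x: "x \<in> B" "x \<notin> Z" by blast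
      then have "x \<in> B - B0" using B0(2) by blast
      then obtain y where y: "y \<in> B0 - B" "insert y (B - {x}) \<in> Bs"
        using matroid less.prems(1) B0(1) unfolding is_matroid_def by blast
      have "finite B" using matroid less.prems(1) unfolding is_matroid_def by (meson finite_subset)
      moreover have "insert y (B - {x}) - Z = (B - Z) - {x}" using y B0(2) by auto
      ultimately have "card (insert y (B - {x}) - Z) < card (B - Z)"
        using x by (metis Diff_iff card_Diff1_less finite_Diff)
      moreover have "I \<subseteq> insert y (B - {x})" using less.prems(2) x I(1) by auto
      ultimately show ?thesis using less.hyps y(2) by blast
    qed (use less.prems in blast)
  qed
qed

text \<open>In a sparse paving matroid of rank \<open>n\<close>, the \<open>(n - 1)\<close>-set \<open>X - {x}\<close> is independent
  and the \<open>(n + 1)\<close>-set \<open>insert y X\<close> contains a basis (it is spanning by paving of the dual),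
  so some basis lies between them; it is either \<open>X\<close> or the exchanged set.\<close>
lemma sparse_paving_basis_exchange:
  assumes matroid: "is_matroid E Bs" and rank: "has_rank Bs n" and sparse: "sparse_paving E Bs n"
    and X: "X \<subseteq> E" "card X = n" and x: "x \<in> X" and y: "y \<in> E" "y \<notin> X"
  shows "X \<in> Bs \<or> insert y (X - {x}) \<in> Bs"
proof -
  have fin_E: "finite E" using matroid unfolding is_matroid_def by blast
  have fin_X: "finite X" using X(1) fin_E finite_subset by blast
  define Z where "Z = insert y X"
  have Z: "Z \<subseteq> E" "card Z = n + 1" using X y fin_X by (auto simp: Z_def)
  have "indep (dual_bases E Bs) (E - Z)"
  proof -
    have "card (E - Z) = card E - n - 1" using Z fin_E by (simp add: card_Diff_subset finite_subset)
    then show ?thesis using sparse unfolding sparse_paving_def paving_def by (simp add: diff_diff_left)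
  qed
  then obtain B0 where B0: "B0 \<in> Bs" "E - Z \<subseteq> E - B0"
    unfolding indep_def dual_bases_def by blast
  then have "B0 \<subseteq> Z" using matroid unfolding is_matroid_def by blast
  moreover have "indep Bs (X - {x})"
  proof -
    have "X - {x} \<subseteq> E" "card (X - {x}) = n - 1" using X x fin_X by auto
    then show ?thesis using sparse unfolding sparse_paving_def paving_def by blast
  qed
  ultimately obtain B where B: "B \<in> Bs" "X - {x} \<subseteq> B" "B \<subseteq> Z"
    using indep_extends_to_basis_within[OF matroid B0(1), of Z "X - {x}"] by (auto simp: Z_def)
  have card_B: "card B = n" using rank B(1) unfolding has_rank_def by blast
  show ?thesis
  proof (cases "x \<in> B")
    case True
    then have "X \<subseteq> B" using B(2) by blast
    then have "X = B" using card_B X(2) B(3) Z fin_E by (metis card_subset_eq finite_subset)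
    then show ?thesis using B(1) by blast
  next
    case False
    have "B \<subseteq> insert y (X - {x})" using False B(3) by (auto simp: Z_def)
    moreover have "card (insert y (X - {x})) = n"
      using y x X(2) fin_X card_Suc_Diff1[OF fin_X x] by simp
    ultimately have "B = insert y (X - {x})" using card_B fin_X by (metis card_subset_eq finite_Diff finite_insert)
    then show ?thesis using B(1) by blast
  qed
qed

section \<open>Translates and sumsets modulo a prime\<close>

locale prime_modulus =
  fixes p :: int
  assumes prime: "prime p"
begin

definition translate :: "int \<Rightarrow> int set \<Rightarrow> int set" where
  "translate e X = (\<lambda>x. (x + e) mod p) ` X"

definition sumset :: "int set \<Rightarrow> int set \<Rightarrow> int set" where
  "sumset A B = (\<lambda>(a, b). (a + b) mod p) ` (A \<times> B)"

definition translates_into :: "int set \<Rightarrow> int set \<Rightarrow> int set" where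
  "translates_into B A = {e \<in> {0..<p}. translate e B \<subseteq> A}"

lemma p_gt_1: "p > 1"
  using prime prime_gt_1_int by blast

lemma mod_in_Zp: "x mod p \<in> {0..<p}"
  using p_gt_1 by simp

lemma finite_Zp_subset: "X \<subseteq> {0..<p} \<Longrightarrow> finite X"
  using finite_subset by blast

lemma card_Zp_subset_le: "X \<subseteq> {0..<p} \<Longrightarrow> card X \<le> nat p"
  using card_mono[of "{0..<p}" X] by simp

lemma eq_Zp_if_card_ge:
  assumes "X \<subseteq> {0..<p}" "nat p \<le> card X"
  shows "X = {0..<p}"
proof -
  have "card X = card {0..<p}" using card_Zp_subset_le[OF assms(1)] assms(2) by simp
  then show ?thesis using assms(1) by (intro card_subset_eq) auto
qed

lemma mod_eq_imp_eq_Zp: "x \<in> {0..<p} \<Longrightarrow> y \<in> {0..<p} \<Longrightarrow> x mod p = y mod p \<Longrightarrow> x = y"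
  by simp

lemma diff_mod_nonzero: "x \<in> {0..<p} \<Longrightarrow> y \<in> {0..<p} \<Longrightarrow> x \<noteq> y \<Longrightarrow> (y - x) mod p \<noteq> 0"
  by (auto simp: mod_eq_0_iff_dvd mod_eq_dvd_iff[symmetric])

lemma translate_subset_Zp: "translate e X \<subseteq> {0..<p}"
  unfolding translate_def using mod_in_Zp by auto

lemma inj_on_add_mod: "inj_on (\<lambda>x. (x + e) mod p) {0..<p}"
proof (rule inj_onI)
  fix x y assume "x \<in> {0..<p}" "y \<in> {0..<p}" "(x + e) mod p = (y + e) mod p"
  then show "x = y" by (metis add_diff_cancel_right' mod_diff_left_eq mod_eq_imp_eq_Zp)
qed

lemma card_translate: "X \<subseteq> {0..<p} \<Longrightarrow> card (translate e X) = card X"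
  unfolding translate_def by (rule card_image) (rule inj_on_subset[OF inj_on_add_mod])

lemma translate_translate: "translate e (translate f X) = translate (e + f) X"
  unfolding translate_def image_image
  by (rule image_cong) (auto simp: mod_add_left_eq mod_add_right_eq ac_simps)

lemma translate_Int: "A \<subseteq> {0..<p} \<Longrightarrow> B \<subseteq> {0..<p} \<Longrightarrow> translate e (A \<inter> B) = translate e A \<inter> translate e B"
  unfolding translate_def using inj_on_image_Int[OF inj_on_add_mod] by blast

lemma translate_Un: "translate e (A \<union> B) = translate e A \<union> translate e B"
  unfolding translate_def by (rule image_Un)

lemma translate_0:
  assumes "X \<subseteq> {0..<p}"
  shows "translate 0 X = X"
proof -
  have "(\<lambda>x. (x + 0) mod p) ` X = id ` X" by (rule image_cong) (use assms in auto)
  then show ?thesis unfolding translate_def by simp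
qed

lemma translate_mod: "translate (e mod p) X = translate e X"
  unfolding translate_def by (simp add: mod_add_right_eq)

lemma translate_cancel: "X \<subseteq> {0..<p} \<Longrightarrow> translate (- e) (translate e X) = X"
  by (simp add: translate_translate translate_0)

lemma translate_subset_if_card_Int_ge:
  assumes "B \<subseteq> {0..<p}" "card B \<le> card (A \<inter> translate e B)"
  shows "translate e B \<subseteq> A"
proof -
  have "A \<inter> translate e B = translate e B"
    using assms card_translate[OF assms(1)] finite_Zp_subset[OF translate_subset_Zp]
    by (intro card_seteq) auto
  then show ?thesis by blast
qed

lemma card_Un_Int_translate:
  assumes "X \<subseteq> {0..<p}"
  shows "card (X \<union> translate d X) + card (X \<inter> translate d X) = 2 * card X"
  using card_Un_Int[OF finite_Zp_subset[OF assms] finite_Zp_subset[OF translate_subset_Zp, of d X]]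
    card_translate[OF assms, of d] by simp

lemma sumset_subset_Zp: "sumset A B \<subseteq> {0..<p}"
  unfolding sumset_def using mod_in_Zp by auto

lemma sumset_memI: "a \<in> A \<Longrightarrow> b \<in> B \<Longrightarrow> (a + b) mod p \<in> sumset A B"
  unfolding sumset_def by auto

lemma sumset_memE:
  assumes "z \<in> sumset A B"
  obtains a b where "a \<in> A" "b \<in> B" "z = (a + b) mod p"
  using assms unfolding sumset_def by auto

lemma sumset_commute: "sumset A B = sumset B A"
  unfolding sumset_def by (auto simp: image_iff) (metis add.commute)+

lemma sumset_mono: "A \<subseteq> A' \<Longrightarrow> B \<subseteq> B' \<Longrightarrow> sumset A B \<subseteq> sumset A' B'"
  unfolding sumset_def by auto

lemma sumset_singleton: "sumset A {b} = translate b A"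
  unfolding sumset_def translate_def by auto

lemma sumset_insert: "sumset A (insert b B) = translate b A \<union> sumset A B"
  unfolding sumset_def translate_def by auto

lemma sumset_pair: "sumset A {x, y} = translate x (A \<union> translate (y - x) A)"
proof -
  have "sumset A {x, y} = translate x A \<union> translate y A"
    using sumset_insert[of A x "{y}"] sumset_singleton by simp
  then show ?thesis by (simp add: translate_Un translate_translate)
qed

lemma card_sumset_pair:
  assumes "X \<subseteq> {0..<p}"
  shows "card (sumset X {x, y}) = card (X \<union> translate (y - x) X)"
  using card_translate[of "X \<union> translate (y - x) X" x] assms translate_subset_Zp
  by (simp add: sumset_pair)

lemma sumset_assoc: "sumset (sumset A B) C = sumset A (sumset B C)"
  unfolding sumset_def
  by (force simp: image_iff mod_add_left_eq mod_add_right_eq ac_simps)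

lemma sumset_translate_left: "sumset (translate e A) B = translate e (sumset A B)"
  unfolding sumset_def translate_def
  by (force simp: image_iff mod_add_left_eq mod_add_right_eq ac_simps)

lemma card_le_card_sumset:
  assumes "A \<subseteq> {0..<p}" "b \<in> B"
  shows "card A \<le> card (sumset A B)"
proof -
  have "translate b A \<subseteq> sumset A B"
    using sumset_mono[of A A "{b}" B] sumset_singleton assms(2) by auto
  then show ?thesis using card_translate[OF assms(1)] sumset_subset_Zp
    by (metis card_mono finite_Zp_subset)
qed

lemma translates_into_subset_Zp: "translates_into B A \<subseteq> {0..<p}"
  unfolding translates_into_def by blast

lemma sumset_translates_into_subset: "sumset (translates_into B A) B \<subseteq> A"
proof
  fix z assume "z \<in> sumset (translates_into B A) B"
  then obtain e b where e: "e \<in> translates_into B A" "b \<in> B" "z = (e + b) mod p"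
    by (rule sumset_memE)
  then have "z = (b + e) mod p" by (simp add: add.commute)
  then have "z \<in> translate e B" using e(2) unfolding translate_def by blast
  with e(1) show "z \<in> A" unfolding translates_into_def by auto
qed

lemma zero_mem_translates_into:
  assumes "U \<subseteq> E" "E \<subseteq> {0..<p}"
  shows "0 \<in> translates_into U E"
proof -
  have "translate 0 U = U" using assms by (intro translate_0) auto
  then show ?thesis using assms(1) p_gt_1 unfolding translates_into_def by simp
qed

definition arith_prog :: "int \<Rightarrow> int \<Rightarrow> nat \<Rightarrow> int set" where
  "arith_prog a d k = (\<lambda>i. (a + int i * d) mod p) ` {..<k}"

definition is_arith_prog :: "int set \<Rightarrow> bool" where
  "is_arith_prog X \<longleftrightarrow> (\<exists>a d. X = arith_prog a d (card X))"

lemma progression_arith_prog: "progression p (arith_prog a d k)"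
  unfolding progression_def arith_prog_def by blast

lemma arith_prog_inj:
  assumes "d mod p \<noteq> 0" "i < nat p" "j < nat p"
    and "(a + int i * d) mod p = (a + int j * d) mod p"
  shows "i = j"
proof -
  have "p dvd (a + int i * d) - (a + int j * d)"
    using assms(4) mod_eq_dvd_iff by blast
  then have "p dvd (int i - int j) * d" by (simp add: algebra_simps)
  moreover have "\<not> p dvd d" using assms(1) by (simp add: dvd_eq_mod_eq_0)
  ultimately have "p dvd (int i - int j)" using prime_dvd_multD[OF prime] by blast
  moreover have "\<bar>int i - int j\<bar> < \<bar>p\<bar>" using assms(2,3) p_gt_1 by linarith
  ultimately show "i = j" using dvd_imp_le_int[of "int i - int j" p] by fastforce
qed

lemma arith_prog_subset_Zp: "arith_prog a d k \<subseteq> {0..<p}"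
  unfolding arith_prog_def using mod_in_Zp by auto

lemma card_arith_prog:
  assumes "d mod p \<noteq> 0" "k \<le> nat p"
  shows "card (arith_prog a d k) = k"
proof -
  have "inj_on (\<lambda>i. (a + int i * d) mod p) {..<k}"
    by (rule inj_onI) (use arith_prog_inj[OF assms(1)] assms(2) in auto)
  then show ?thesis unfolding arith_prog_def by (simp add: card_image)
qed

lemma arith_prog_full:
  assumes "d mod p \<noteq> 0"
  shows "arith_prog a d (nat p) = {0..<p}"
  using card_arith_prog[OF assms, of "nat p"] arith_prog_subset_Zp
  by (simp add: card_subset_eq)

lemma progression_if_card_ge:
  assumes X: "X \<subseteq> {0..<p}" and large: "nat p \<le> card X + 1"
  shows "progression p X"
proof (cases "X = {0..<p}")
  case True
  have "1 mod p \<noteq> 0" using p_gt_1 by simp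
  then show ?thesis using True progression_arith_prog[of 0 1 "nat p"] arith_prog_full by simp
next
  case False
  then obtain c where c: "c \<in> {0..<p}" "c \<notin> X" using X by blast
  have "arith_prog (c + 1) 1 (nat p - 1) \<subseteq> {0..<p} - {c}"
  proof
    fix z assume "z \<in> arith_prog (c + 1) 1 (nat p - 1)"
    then obtain i where i: "i < nat p - 1" "z = (c + (1 + int i)) mod p"
      unfolding arith_prog_def by (auto simp: ac_simps)
    have "z \<noteq> c"
    proof
      assume "z = c"
      then have "(c + (1 + int i)) mod p = c mod p" using i(2) c(1) by simp
      then have "p dvd (c + (1 + int i)) - c" by (simp only: mod_eq_dvd_iff)
      then show False using i(1) zdvd_imp_le[of p "1 + int i"] by simp
    qed
    then show "z \<in> {0..<p} - {c}" using i(2) mod_in_Zp by auto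
  qed
  moreover have "card (arith_prog (c + 1) 1 (nat p - 1)) = nat p - 1"
    using card_arith_prog p_gt_1 by simp
  moreover have "X \<subseteq> {0..<p} - {c}" using X c by blast
  moreover have "card ({0..<p} - {c}) = nat p - 1" using c(1) by simp
  ultimately have "arith_prog (c + 1) 1 (nat p - 1) = X"
    using large card_subset_eq[of "{0..<p} - {c}"] card_mono[of "{0..<p} - {c}" X]
    by (metis finite_Diff finite_atLeastLessThan_int le_antisym add_diff_cancel_right' diff_le_mono)
  then show ?thesis using progression_arith_prog by metis
qed

lemma translate_closed_eq_Zp:
  assumes X: "X \<subseteq> {0..<p}" "X \<noteq> {}" and d: "d mod p \<noteq> 0"
    and closed: "translate d X \<subseteq> X"
  shows "X = {0..<p}"
proof -
  obtain a where a: "a \<in> X" using X(2) by blast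
  have "(a + int i * d) mod p \<in> X" for i
  proof (induction i)
    case 0
    then show ?case using a X(1) by auto
  next
    case (Suc i)
    have "(a + int (Suc i) * d) mod p = ((a + int i * d) mod p + d) mod p"
      by (simp add: mod_add_left_eq mod_add_right_eq algebra_simps)
    then show ?case using closed Suc unfolding translate_def by auto
  qed
  then have "arith_prog a d (nat p) \<subseteq> X" unfolding arith_prog_def by auto
  then show ?thesis using arith_prog_full[OF d] X(1) by simp
qed

lemma sumset_arith_prog:
  assumes "k \<ge> 1" "l \<ge> 1"
  shows "sumset (arith_prog a d k) (arith_prog b d l) = arith_prog (a + b) d (k + l - 1)"
proof
  show "sumset (arith_prog a d k) (arith_prog b d l) \<subseteq> arith_prog (a + b) d (k + l - 1)"
  proof
    fix z assume "z \<in> sumset (arith_prog a d k) (arith_prog b d l)"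
    then obtain i j where ij: "i < k" "j < l"
      and "z = ((a + int i * d) mod p + (b + int j * d) mod p) mod p"
      unfolding arith_prog_def by (auto elim!: sumset_memE)
    then have "z = (a + b + int (i + j) * d) mod p" by (simp add: mod_add_eq algebra_simps)
    moreover have "i + j < k + l - 1" using ij by simp
    ultimately show "z \<in> arith_prog (a + b) d (k + l - 1)" unfolding arith_prog_def by blast
  qed
next
  show "arith_prog (a + b) d (k + l - 1) \<subseteq> sumset (arith_prog a d k) (arith_prog b d l)"
  proof
    fix z assume "z \<in> arith_prog (a + b) d (k + l - 1)"
    then obtain m where m: "m < k + l - 1" "z = (a + b + int m * d) mod p" unfolding arith_prog_def by auto
    obtain i j where ij: "i < k" "j < l" "m = i + j"
    proof (cases "m < k")
      case True
      then show ?thesis using that[of m 0] assms by simp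
    next
      case False
      then show ?thesis using that[of "k - 1" "m - (k - 1)"] assms m(1) by simp
    qed
    have "z = ((a + int i * d) mod p + (b + int j * d) mod p) mod p"
      using m(2) ij(3) by (simp add: mod_add_eq algebra_simps)
    moreover have "(a + int i * d) mod p \<in> arith_prog a d k" "(b + int j * d) mod p \<in> arith_prog b d l"
      unfolding arith_prog_def using ij(1,2) by blast+
    ultimately show "z \<in> sumset (arith_prog a d k) (arith_prog b d l)" by (simp add: sumset_memI)
  qed
qed

lemma exists_run_start:
  assumes X: "X \<subseteq> {0..<p}" "X \<noteq> {0..<p}" and d: "d mod p \<noteq> 0" and y: "y \<in> X"
  shows "\<exists>j < card X. (y + int j * - d) mod p \<in> X - translate d X"
proof -
  have neg_d: "(- d) mod p \<noteq> 0" using d by (simp add: zmod_zminus1_not_zero)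
  define Q where "Q = {j. (y + int (Suc j) * - d) mod p \<notin> X}"
  have "Q \<noteq> {}"
  proof
    assume "Q = {}"
    then have "(y + int i * - d) mod p \<in> X" for i
      using y X(1) by (cases i) (auto simp: Q_def)
    then have "arith_prog y (- d) (nat p) \<subseteq> X" unfolding arith_prog_def by auto
    then show False using arith_prog_full[OF neg_d] X by blast
  qed
  define j0 where "j0 = (LEAST j. j \<in> Q)"
  have j0: "j0 \<in> Q" unfolding j0_def using \<open>Q \<noteq> {}\<close> by (metis LeastI ex_in_conv)
  have run: "(y + int i * - d) mod p \<in> X" if "i \<le> j0" for i
  proof (cases i)
    case 0
    then show ?thesis using y X(1) by auto
  next
    case (Suc i')
    then have "i' \<notin> Q" using that not_less_Least unfolding j0_def by (metis Suc_le_lessD)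
    then show ?thesis using Suc by (simp add: Q_def)
  qed
  define w where "w = (y + int j0 * - d) mod p"
  have "w \<notin> translate d X"
  proof
    assume "w \<in> translate d X"
    then obtain x where x: "x \<in> X" "w = (x + d) mod p" unfolding translate_def by auto
    have "x = (w - d) mod p" using x X(1) by (auto simp: mod_diff_left_eq)
    also have "\<dots> = (y + int (Suc j0) * - d) mod p"
      unfolding w_def by (simp add: mod_diff_left_eq algebra_simps)
    finally show False using x(1) j0 by (simp add: Q_def)
  qed
  moreover have "j0 < card X"
  proof (rule ccontr)
    assume "\<not> j0 < card X"
    then have "arith_prog y (- d) (Suc (card X)) \<subseteq> X"
      using run unfolding arith_prog_def by auto
    moreover have "Suc (card X) \<le> nat p"
      using X card_Zp_subset_le eq_Zp_if_card_ge by (metis not_less_eq_eq)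
    ultimately show False
      using card_arith_prog[OF neg_d] card_mono[OF finite_Zp_subset[OF X(1)]] by (metis Suc_n_not_le_n)
  qed
  ultimately show ?thesis using run[of j0] unfolding w_def by blast
qed

text \<open>The hypothesis leaves at most one point \<open>s \<in> X\<close> with \<open>s - d \<notin> X\<close>, and walking back in steps
  of \<open>d\<close> from any point of \<open>X\<close> reaches it.\<close>
lemma arith_prog_if_card_Un_translate_le:
  assumes X: "X \<subseteq> {0..<p}" "X \<noteq> {}" "X \<noteq> {0..<p}" and d: "d mod p \<noteq> 0"
    and small: "card (X \<union> translate d X) \<le> card X + 1"
  shows "\<exists>s. X = arith_prog s d (card X)"
proof -
  have fin_X: "finite X" and fin_T: "finite (translate d X)"
    using finite_Zp_subset[OF X(1)] finite_Zp_subset[OF translate_subset_Zp] .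
  have "card (X \<union> translate d X) = card (translate d X) + card (X - translate d X)"
    using fin_X fin_T by (metis card_Un_disjoint Diff_disjoint Un_Diff_cancel Un_commute finite_Diff)
  then have "card (X - translate d X) \<le> 1" using small card_translate[OF X(1)] by simp
  moreover obtain y where "y \<in> X" using X(2) by blast
  then obtain s where s: "s \<in> X - translate d X"
    using exists_run_start[OF X(1,3) d] by blast
  ultimately have starts: "X - translate d X = {s}"
    using fin_X by (metis card_le_Suc0_iff_eq finite_Diff singletonI subsetI subset_singletonD empty_iff One_nat_def)
  have "X \<subseteq> arith_prog s d (card X)"
  proof
    fix y assume y: "y \<in> X"
    obtain j where j: "j < card X" "(y + int j * - d) mod p = s"
      using exists_run_start[OF X(1,3) d y] starts by blast
    then have "y = (s + int j * d) mod p"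
      using y X(1) by (auto simp: mod_add_left_eq)
    then show "y \<in> arith_prog s d (card X)" unfolding arith_prog_def using j(1) by blast
  qed
  moreover have "card (arith_prog s d (card X)) = card X"
    using card_arith_prog[OF d] card_Zp_subset_le[OF X(1)] by blast
  ultimately show ?thesis by (metis card_subset_eq finite_Zp_subset arith_prog_subset_Zp)
qed

section \<open>The Cauchy--Davenport theorem\<close>

lemma exists_translate_meeting_not_inside:
  assumes A: "A \<subseteq> {0..<p}" "A \<noteq> {}" "A \<noteq> {0..<p}"
    and B: "B \<subseteq> {0..<p}" "x \<in> B" "y \<in> B" "x \<noteq> y"
  obtains e where "A \<inter> translate e B \<noteq> {}" "\<not> translate e B \<subseteq> A"
proof -
  have "\<not> translate (y - x) A \<subseteq> A"
    using translate_closed_eq_Zp[OF A(1,2) diff_mod_nonzero] A(3) B by blast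
  then obtain a where a: "a \<in> A" "(a + (y - x)) mod p \<notin> A" unfolding translate_def by blast
  have "(x + (a - x)) mod p = a" "(y + (a - x)) mod p = (a + (y - x)) mod p"
    using a(1) A(1) by (auto simp: algebra_simps)
  then have "a \<in> translate (a - x) B" "(a + (y - x)) mod p \<in> translate (a - x) B"
    using B(2,3) unfolding translate_def by (metis image_eqI)+
  then show thesis by (intro that[of "a - x"]) (use a in blast)+
qed

lemma e_transform:
  fixes e :: int
  assumes A: "A \<subseteq> {0..<p}" and B: "B \<subseteq> {0..<p}"
  defines "B' \<equiv> {b \<in> B. (b + e) mod p \<in> A}"
  shows "sumset (A \<union> translate e B) B' \<subseteq> sumset A B"
    and "card B' = card (A \<inter> translate e B)"
    and "card (A \<union> translate e B) + card B' = card A + card B"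
proof -
  show "sumset (A \<union> translate e B) B' \<subseteq> sumset A B"
  proof
    fix z assume "z \<in> sumset (A \<union> translate e B) B'"
    then obtain u v where uv: "u \<in> A \<union> translate e B" "v \<in> B'" "z = (u + v) mod p"
      by (rule sumset_memE)
    show "z \<in> sumset A B"
    proof (cases "u \<in> A")
      case True
      then show ?thesis using uv by (auto simp: B'_def intro: sumset_memI)
    next
      case False
      then obtain b where b: "b \<in> B" "u = (b + e) mod p" using uv(1) unfolding translate_def by auto
      have "z = ((v + e) mod p + b) mod p" using uv(3) b(2) by (simp add: mod_add_left_eq mod_add_right_eq ac_simps)
      then show ?thesis using b(1) uv(2) by (auto simp: B'_def intro: sumset_memI)
    qed
  qed
  have "translate e B' = A \<inter> translate e B" unfolding B'_def translate_def by blast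
  moreover have "B' \<subseteq> {0..<p}" using B by (auto simp: B'_def)
  ultimately show card_B': "card B' = card (A \<inter> translate e B)" using card_translate by metis
  have "card (A \<union> translate e B) + card (A \<inter> translate e B) = card A + card (translate e B)"
    using card_Un_Int[OF finite_Zp_subset[OF A] finite_Zp_subset[OF translate_subset_Zp]] by simp
  then show "card (A \<union> translate e B) + card B' = card A + card B"
    using card_B' card_translate[OF B] by simp
qed

theorem cauchy_davenport:
  assumes "A \<subseteq> {0..<p}" "B \<subseteq> {0..<p}" "A \<noteq> {}" "B \<noteq> {}" "sumset A B \<noteq> {0..<p}"
  shows "card A + card B \<le> card (sumset A B) + 1"
  using assms
proof (induction "card B" arbitrary: A B rule: less_induct)
  case (less B A)
  note A = less.prems(1) and B = less.prems(2)
  show ?case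
  proof (cases "card B = 1")
    case True
    then obtain b where "B = {b}" using card_1_singletonE by blast
    then show ?thesis using sumset_singleton card_translate[OF A] by simp
  next
    case False
    then obtain x y where xy: "x \<in> B" "y \<in> B" "x \<noteq> y"
      using less.prems(4) by (metis is_singletonI' is_singleton_altdef)
    have "A \<noteq> {0..<p}"
    proof
      assume "A = {0..<p}"
      then have "nat p \<le> card (sumset A B)" using card_le_card_sumset[OF A xy(1)] by simp
      then show False using eq_Zp_if_card_ge[OF sumset_subset_Zp] less.prems(5) by blast
    qed
    then obtain e where e: "A \<inter> translate e B \<noteq> {}" "\<not> translate e B \<subseteq> A"
      using exists_translate_meeting_not_inside[OF A less.prems(3) _ B xy] by blast
    define A' where "A' = A \<union> translate e B"
    define B' where "B' = {b \<in> B. (b + e) mod p \<in> A}"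
    note transform = e_transform[OF A B, of e, folded A'_def B'_def]
    have fin_T: "finite (translate e B)" using translate_subset_Zp by (rule finite_Zp_subset)
    have "card A' + card B' \<le> card (sumset A' B') + 1"
    proof (rule less.hyps)
      show "card B' < card B"
        using transform(2) card_translate[OF B] e(2) fin_T
        by (metis Int_lower2 psubsetI psubset_card_mono inf.absorb_iff2)
      show "B' \<noteq> {}" using transform(2) e(1) fin_T by fastforce
      show "A' \<subseteq> {0..<p}" "B' \<subseteq> {0..<p}" "A' \<noteq> {}"
        using A B translate_subset_Zp less.prems(3) by (auto simp: A'_def B'_def)
      show "sumset A' B' \<noteq> {0..<p}"
        using transform(1) less.prems(5) sumset_subset_Zp by blast
    qed
    moreover have "card (sumset A' B') \<le> card (sumset A B)"
      using transform(1) sumset_subset_Zp by (metis card_mono finite_Zp_subset)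
    ultimately show ?thesis using transform(3) by linarith
  qed
qed

text \<open>Writing \<open>P = {0, d} + P'\<close> with \<open>P'\<close> one term shorter, Cauchy--Davenport for \<open>(A + {0, d}) + P'\<close>
  forces \<open>card (A \<union> translate d A) \<le> card A + 1\<close>, so \<open>A\<close> is a progression of difference \<open>d\<close>.\<close>
lemma critical_sumset_arith_prog:
  assumes A: "A \<subseteq> {0..<p}" "A \<noteq> {}"
    and l: "l \<ge> 2" "card (arith_prog b d l) = l"
    and not_full: "sumset A (arith_prog b d l) \<noteq> {0..<p}"
    and critical: "card (sumset A (arith_prog b d l)) + 1 = card A + l"
  shows "is_arith_prog (sumset A (arith_prog b d l))"
proof -
  have d: "d mod p \<noteq> 0"
  proof
    assume d0: "d mod p = 0"
    have "(b + int i * d) mod p = b mod p" for i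
      using mod_add_right_eq[of b "int i * d" p] mod_mult_right_eq[of "int i" d p] d0 by simp
    then have "arith_prog b d l \<subseteq> {b mod p}" unfolding arith_prog_def by auto
    then have "card (arith_prog b d l) \<le> 1" using card_mono[of "{b mod p}"] by fastforce
    then show False using l by simp
  qed
  have "arith_prog 0 d 2 = {0, d mod p}"
    by (simp add: arith_prog_def numeral_2_eq_2 lessThan_Suc insert_commute)
  then have "arith_prog b d l = sumset {0, d mod p} (arith_prog b d (l - 1))"
    using sumset_arith_prog[of 2 "l - 1" 0 d b] l(1) by simp
  moreover have "sumset A {0, d mod p} = A \<union> translate d A"
    using sumset_pair[of A 0 "d mod p"] translate_0[of "A \<union> translate d A"] A(1) translate_subset_Zp
    by (simp add: translate_mod)
  ultimately have split: "sumset A (arith_prog b d l) = sumset (A \<union> translate d A) (arith_prog b d (l - 1))"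
    by (simp add: sumset_assoc[symmetric])
  have "card (A \<union> translate d A) + card (arith_prog b d (l - 1))
      \<le> card (sumset A (arith_prog b d l)) + 1"
    unfolding split
  proof (rule cauchy_davenport)
    show "A \<union> translate d A \<subseteq> {0..<p}" using A(1) translate_subset_Zp by blast
    show "arith_prog b d (l - 1) \<subseteq> {0..<p}" by (rule arith_prog_subset_Zp)
    show "A \<union> translate d A \<noteq> {}" using A(2) by blast
    show "arith_prog b d (l - 1) \<noteq> {}" using l(1) by (auto simp: arith_prog_def lessThan_empty_iff)
    show "sumset (A \<union> translate d A) (arith_prog b d (l - 1)) \<noteq> {0..<p}" using split not_full by simp
  qed
  moreover have "card (arith_prog b d (l - 1)) = l - 1"
    using card_arith_prog[OF d] card_Zp_subset_le[OF arith_prog_subset_Zp, of b d l] l(2) by simp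
  ultimately have "card (A \<union> translate d A) \<le> card A + 1" using critical l(1) by linarith
  moreover have "A \<noteq> {0..<p}"
  proof
    assume "A = {0..<p}"
    then have "card A = nat p" by simp
    then show False using critical card_Zp_subset_le[OF sumset_subset_Zp, of A "arith_prog b d l"] l(1)
      by linarith
  qed
  ultimately obtain a where a: "A = arith_prog a d (card A)"
    using arith_prog_if_card_Un_translate_le[OF A _ d] by blast
  have "card A \<ge> 1" using A finite_Zp_subset by (simp add: Suc_le_eq card_gt_0_iff)
  then have "sumset A (arith_prog b d l) = arith_prog (a + b) d (card A + l - 1)"
    using sumset_arith_prog[of "card A" l a d b] l(1) a by simp
  moreover have "card A + l - 1 = card (sumset A (arith_prog b d l))" using critical by simp
  ultimately show ?thesis unfolding is_arith_prog_def by metis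
qed

lemma card_translates_into_add_le:
  assumes E: "E \<subseteq> {0..<p}" "E \<noteq> {0..<p}" and U: "U \<subseteq> E" "U \<noteq> {}"
  shows "card (translates_into U E) + card U \<le> card E + 1"
proof -
  have sub: "sumset (translates_into U E) U \<subseteq> E" by (rule sumset_translates_into_subset)
  have "card (translates_into U E) + card U \<le> card (sumset (translates_into U E) U) + 1"
  proof (rule cauchy_davenport)
    show "translates_into U E \<subseteq> {0..<p}" "U \<subseteq> {0..<p}" using translates_into_subset_Zp U E by auto
    show "translates_into U E \<noteq> {}" using zero_mem_translates_into[OF U(1) E(1)] by blast
    show "U \<noteq> {}" by (rule U(2))
    show "sumset (translates_into U E) U \<noteq> {0..<p}" using sub E by blast
  qed
  moreover have "card (sumset (translates_into U E) U) \<le> card E"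
    using card_mono[OF finite_Zp_subset[OF E(1)] sub] .
  ultimately show ?thesis by linarith
qed

section \<open>Vosper's theorem\<close>

definition critical_pair :: "int set \<Rightarrow> int set \<Rightarrow> bool" where
  "critical_pair A B \<longleftrightarrow> A \<subseteq> {0..<p} \<and> B \<subseteq> {0..<p} \<and> 2 \<le> card A \<and> 2 \<le> card B \<and>
     card (sumset A B) + 1 = card A + card B \<and> card (sumset A B) + 2 \<le> nat p"

lemma critical_pairD:
  assumes "critical_pair A B"
  shows "A \<subseteq> {0..<p}" "B \<subseteq> {0..<p}" "2 \<le> card A" "2 \<le> card B"
    "card (sumset A B) + 1 = card A + card B" "card (sumset A B) + 2 \<le> nat p"
  using assms unfolding critical_pair_def by blast+

lemma critical_pair_commute: "critical_pair A B \<longleftrightarrow> critical_pair B A"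
  unfolding critical_pair_def by (auto simp: sumset_commute)

lemma critical_pair_not_Zp:
  assumes "critical_pair A B"
  shows "A \<noteq> {0..<p}"
proof
  assume "A = {0..<p}"
  then have "card A = nat p" by simp
  then show False using critical_pairD(4,5,6)[OF assms] by linarith
qed

lemma vosper_card_two:
  assumes crit: "critical_pair A B" and two: "card B = 2"
  shows "is_arith_prog (sumset A B)"
proof -
  obtain x y where B: "B = {x, y}" "x \<noteq> y" using two unfolding card_2_iff by blast
  have "x \<in> {0..<p}" "y \<in> {0..<p}" using B(1) critical_pairD(2)[OF crit] by auto
  then have "arith_prog x (y - x) 2 = B"
    using B(1) by (simp add: arith_prog_def numeral_2_eq_2 lessThan_Suc insert_commute)
  moreover have "sumset A B \<noteq> {0..<p}" "A \<noteq> {}"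
    using critical_pairD(3,6)[OF crit] by auto
  ultimately show ?thesis
    using critical_sumset_arith_prog[OF critical_pairD(1)[OF crit], of 2 x "y - x"]
      critical_pairD(5)[OF crit] two by simp
qed

lemma e_transform_critical:
  fixes e :: int
  assumes crit: "critical_pair A B" and overlap: "2 \<le> card (A \<inter> translate e B)"
  defines "A' \<equiv> A \<union> translate e B" and "B' \<equiv> {b \<in> B. (b + e) mod p \<in> A}"
  shows "critical_pair A' B'" "sumset A' B' = sumset A B"
    "card B' = card (A \<inter> translate e B)" "card A \<le> card A'"
proof -
  note A = critical_pairD(1)[OF crit] and B = critical_pairD(2)[OF crit]
    and crit_card = critical_pairD(5)[OF crit]
  have not_full: "sumset A B \<noteq> {0..<p}" using critical_pairD(6)[OF crit] by auto
  note transform = e_transform[OF A B, of e, folded A'_def B'_def]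
  show card_B': "card B' = card (A \<inter> translate e B)" by (rule transform(2))
  have A': "A' \<subseteq> {0..<p}" and B': "B' \<subseteq> {0..<p}"
    using A B translate_subset_Zp by (auto simp: A'_def B'_def)
  show "card A \<le> card A'" using finite_Zp_subset[OF A'] by (simp add: A'_def card_mono)
  have "card A' + card B' \<le> card (sumset A' B') + 1"
  proof (rule cauchy_davenport[OF A' B'])
    show "A' \<noteq> {}" using critical_pairD(3)[OF crit] by (auto simp: A'_def)
    show "B' \<noteq> {}" using overlap card_B' by auto
    show "sumset A' B' \<noteq> {0..<p}" using transform(1) not_full sumset_subset_Zp by blast
  qed
  moreover have "card (sumset A' B') \<le> card (sumset A B)"
    using transform(1) sumset_subset_Zp finite_Zp_subset by (metis card_mono)
  ultimately have same_card: "card (sumset A' B') = card (sumset A B)" using transform(3) crit_card by linarith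
  then show sum_eq: "sumset A' B' = sumset A B"
    using transform(1) finite_Zp_subset[OF sumset_subset_Zp] by (simp add: card_subset_eq)
  show "critical_pair A' B'"
    unfolding critical_pair_def sum_eq
    using A' B' \<open>card A \<le> card A'\<close> critical_pairD[OF crit] overlap card_B' transform(3)
    by linarith
qed

text \<open>If \<open>B + {x, y}\<close> is already all of \<open>B + B\<close>, a third point \<open>z\<close> gives \<open>2z = w + t\<close> with
  \<open>t \<in> {x, y}\<close>, \<open>w \<in> B\<close>, and then \<open>z, w \<in> B \<inter> (B + (z - t))\<close>.\<close>
lemma exists_translate_double_overlap:
  assumes B: "B \<subseteq> {0..<p}" "3 \<le> card B" and small: "card (sumset B B) + 1 \<le> 2 * card B"
  obtains d where "d mod p \<noteq> 0" "2 \<le> card (B \<inter> translate d B)"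
proof -
  have fin_B: "finite B" using finite_Zp_subset[OF B(1)] .
  have "2 \<le> card B" using B(2) by simp
  then obtain x y where xy: "x \<in> B" "y \<in> B" "x \<noteq> y" by (rule obtain_two_distinct)
  have d: "(y - x) mod p \<noteq> 0" using xy B(1) by (intro diff_mod_nonzero) auto
  show thesis
  proof (cases "2 \<le> card (B \<inter> translate (y - x) B)")
    case True
    then show thesis by (rule that[OF d])
  next
    case False
    have pair_sub: "sumset B {x, y} \<subseteq> sumset B B" using xy by (intro sumset_mono) auto
    have "card (sumset B B) \<le> card (sumset B {x, y})"
      using small False card_sumset_pair[OF B(1), of x y] card_Un_Int_translate[OF B(1), of "y - x"] by linarith
    then have pair_eq: "sumset B {x, y} = sumset B B"
      using pair_sub finite_Zp_subset[OF sumset_subset_Zp] by (meson card_seteq)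
    have "\<not> B \<subseteq> {x, y}"
    proof
      assume "B \<subseteq> {x, y}"
      then have "card B \<le> card {x, y}" by (intro card_mono) auto
      then show False using B(2) xy(3) by simp
    qed
    then obtain z where z: "z \<in> B" "z \<noteq> x" "z \<noteq> y" by blast
    have "(z + z) mod p \<in> sumset B {x, y}" using pair_eq sumset_memI[OF z(1) z(1)] by simp
    then obtain w t where wt: "w \<in> B" "t \<in> {x, y}" "(z + z) mod p = (w + t) mod p"
      by (rule sumset_memE)
    have Zp: "z \<in> {0..<p}" "w \<in> {0..<p}" "t \<in> {0..<p}" using z(1) wt(1,2) xy B(1) by auto
    have "z \<noteq> t" using wt(2) z by auto
    then have d': "(z - t) mod p \<noteq> 0" using Zp by (intro diff_mod_nonzero) auto
    have "(t + (z - t)) mod p = z" using Zp by simp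
    then have z_in: "z \<in> translate (z - t) B" using wt(2) xy unfolding translate_def by force
    have "(z + (z - t)) mod p = ((z + z) mod p - t) mod p"
      by (simp add: mod_diff_left_eq)
    also have "\<dots> = ((w + t) mod p - t) mod p" using wt(3) by simp
    also have "\<dots> = w" using Zp by (simp add: mod_diff_left_eq)
    finally have w_in: "w \<in> translate (z - t) B" using z(1) unfolding translate_def by force
    have "z \<noteq> w"
    proof
      assume "z = w"
      then have "(z + z) mod p = (z + t) mod p" using wt(3) by simp
      then have "z mod p = t mod p" by (metis add_diff_cancel_left' mod_diff_left_eq mod_diff_right_eq)
      then show False using Zp \<open>z \<noteq> t\<close> by simp
    qed
    then have "2 \<le> card (B \<inter> translate (z - t) B)"
      using two_le_card[of "B \<inter> translate (z - t) B" z w] z_in w_in z(1) wt(1) fin_B by blast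
    then show thesis by (rule that[OF d'])
  qed
qed

lemma card_translates_into_lower_bound:
  assumes crit: "critical_pair A B"
    and rigid: "\<And>e. 2 \<le> card (A \<inter> translate e B) \<Longrightarrow> translate e B \<subseteq> A"
  shows "card A + 1 \<le> card (translates_into B A) + card B"
proof -
  note A = critical_pairD(1)[OF crit] and B = critical_pairD(2)[OF crit]
  obtain x y where xy: "x \<in> B" "y \<in> B" "x \<noteq> y"
    using critical_pairD(4)[OF crit] by (rule obtain_two_distinct)
  have Zp: "x \<in> {0..<p}" "y \<in> {0..<p}" using xy B by auto
  define d where "d = y - x"
  have d: "d mod p \<noteq> 0" unfolding d_def using Zp xy(3) by (intro diff_mod_nonzero) auto
  have "sumset A {x, y} \<subseteq> sumset A B" using xy by (intro sumset_mono) auto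
  then have "card (A \<union> translate d A) \<le> card (sumset A B)"
    using card_sumset_pair[OF A, of x y] finite_Zp_subset[OF sumset_subset_Zp]
    by (metis card_mono d_def)
  then have "card A + 1 \<le> card (A \<inter> translate d A) + card B"
    using card_Un_Int_translate[OF A, of d] critical_pairD(5)[OF crit] by linarith
  moreover have "card (A \<inter> translate d A) \<le> card (translates_into B A)"
  proof (rule card_inj_on_le)
    txt \<open>A point \<open>c = a + d\<close> of \<open>A \<inter> (A + d)\<close> yields the translate \<open>B + (c - y)\<close>, which meets
      \<open>A\<close> in the two points \<open>a\<close> and \<open>c\<close>.\<close>
    show "(\<lambda>c. (c - y) mod p) ` (A \<inter> translate d A) \<subseteq> translates_into B A"
    proof
      fix e assume "e \<in> (\<lambda>c. (c - y) mod p) ` (A \<inter> translate d A)"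
      then obtain a c where a: "a \<in> A" "c \<in> A" "c = (a + d) mod p" and e: "e = (c - y) mod p"
        unfolding translate_def by blast
      have Zp_a: "a \<in> {0..<p}" using a A by auto
      have "(x + (c - y)) mod p = (c + (x - y)) mod p" by (simp add: algebra_simps)
      also have "\<dots> = (a + d + (x - y)) mod p" unfolding a(3) by (simp add: mod_add_left_eq)
      also have "\<dots> = a" using Zp_a by (simp add: d_def)
      finally have "(x + (c - y)) mod p = a" .
      moreover have "(y + (c - y)) mod p = c" by (simp add: a(3))
      ultimately have "a \<in> A \<inter> translate (c - y) B" "c \<in> A \<inter> translate (c - y) B"
        using a xy unfolding translate_def by force+
      moreover have "a \<noteq> c"
      proof
        assume "a = c"
        then have "(a + d) mod p = a mod p" using Zp_a a(3) by simp
        then have "p dvd (a + d) - a" by (simp only: mod_eq_dvd_iff)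
        then show False using d by (simp add: dvd_eq_mod_eq_0)
      qed
      ultimately have "2 \<le> card (A \<inter> translate (c - y) B)"
        using finite_Zp_subset[OF A] by (intro two_le_card) auto
      then have "translate e B \<subseteq> A" using rigid translate_mod e by metis
      then show "e \<in> translates_into B A"
        using mod_in_Zp e unfolding translates_into_def by blast
    qed
    show "inj_on (\<lambda>c. (c - y) mod p) (A \<inter> translate d A)"
    proof (rule inj_onI)
      fix c c' assume "c \<in> A \<inter> translate d A" "c' \<in> A \<inter> translate d A" "(c - y) mod p = (c' - y) mod p"
      then show "c = c'" using A by (metis IntD1 diff_add_cancel mod_add_left_eq mod_eq_imp_eq_Zp subsetD)
    qed
  qed (rule finite_Zp_subset[OF translates_into_subset_Zp])
  ultimately show ?thesis by linarith
qed

lemma rigid_critical_pair_not_translate: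
  assumes crit: "critical_pair A B" and three: "3 \<le> card B"
    and rigid: "\<And>e. 2 \<le> card (A \<inter> translate e B) \<Longrightarrow> translate e B \<subseteq> A"
    and A_eq: "A = translate f B"
  shows False
proof -
  note B = critical_pairD(2)[OF crit]
  have card_A: "card A = card B" using A_eq card_translate[OF B] by simp
  have "sumset A B = translate f (sumset B B)" using A_eq by (simp add: sumset_translate_left)
  then have "card (sumset B B) = card (sumset A B)" using card_translate[OF sumset_subset_Zp] by simp
  then have "card (sumset B B) + 1 \<le> 2 * card B" using critical_pairD(5)[OF crit] card_A by simp
  then obtain d where d: "d mod p \<noteq> 0" "2 \<le> card (B \<inter> translate d B)"
    using exists_translate_double_overlap[OF B three] by blast
  have shifted: "A \<inter> translate (f + d) B = translate f (B \<inter> translate d B)"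
    using A_eq translate_Int[OF B translate_subset_Zp] by (simp add: translate_translate add.commute)
  then have "2 \<le> card (A \<inter> translate (f + d) B)"
    using d(2) card_translate[of "B \<inter> translate d B" f] B by (simp add: le_infI1)
  then have "translate f (translate d B) \<subseteq> translate f B"
    using rigid A_eq by (simp add: translate_translate add.commute)
  then have "translate (- f) (translate f (translate d B)) \<subseteq> translate (- f) (translate f B)"
    unfolding translate_def by (rule image_mono)
  then have "translate d B \<subseteq> B" using B translate_subset_Zp by (simp add: translate_cancel)
  moreover have "B \<noteq> {}" using critical_pairD(4)[OF crit] by auto
  ultimately show False
    using translate_closed_eq_Zp[OF B _ d(1)] critical_pair_not_Zp crit critical_pair_commute by blast
qed

lemma rigid_critical_pair_reduce:
  assumes crit: "critical_pair A B" and le: "card B \<le> card A" and three: "3 \<le> card B"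
    and rigid: "\<And>e. 2 \<le> card (A \<inter> translate e B) \<Longrightarrow> translate e B \<subseteq> A"
  defines "F \<equiv> translates_into B A"
  shows "critical_pair F B" "sumset F B = A" "card F < card A"
proof -
  note A = critical_pairD(1)[OF crit] and B = critical_pairD(2)[OF crit]
  have F: "F \<subseteq> {0..<p}" unfolding F_def by (rule translates_into_subset_Zp)
  have sub: "sumset F B \<subseteq> A" unfolding F_def by (rule sumset_translates_into_subset)
  have lower: "card A + 1 \<le> card F + card B"
    unfolding F_def using card_translates_into_lower_bound[OF crit rigid] .
  have "card F + card B \<le> card (sumset F B) + 1"
  proof (rule cauchy_davenport[OF F B])
    show "F \<noteq> {}" using lower le by auto
    show "B \<noteq> {}" using critical_pairD(4)[OF crit] by auto
    show "sumset F B \<noteq> {0..<p}" using sub critical_pair_not_Zp[OF crit] A by blast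
  qed
  moreover have "card (sumset F B) \<le> card A" using card_mono[OF finite_Zp_subset[OF A] sub] .
  ultimately have card_F: "card F + card B = card A + 1" and "card (sumset F B) = card A"
    using lower by linarith+
  then show sum_eq: "sumset F B = A" using sub finite_Zp_subset[OF A] by (simp add: card_subset_eq)
  show "card F < card A" using card_F critical_pairD(4)[OF crit] by linarith
  have "card F \<noteq> 1"
  proof
    assume "card F = 1"
    then obtain f where "F = {f}" by (rule card_1_singletonE)
    then have "translate f B \<subseteq> A" unfolding F_def translates_into_def by blast
    moreover have "card (translate f B) = card A" using card_F \<open>card F = 1\<close> card_translate[OF B] by simp
    ultimately have "A = translate f B" using finite_Zp_subset[OF A] by (metis card_subset_eq)
    then show False using rigid_critical_pair_not_translate[OF crit three rigid] by blast
  qed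
  then have "2 \<le> card F" using lower le by linarith
  then show "critical_pair F B"
    unfolding critical_pair_def sum_eq using F B card_F critical_pairD[OF crit] by linarith
qed

text \<open>Lexicographic in the pair (smaller cardinality, larger cardinality), as both are at most \<open>p\<close>.\<close>
definition pair_size :: "int set \<Rightarrow> int set \<Rightarrow> nat" where
  "pair_size A B = min (card A) (card B) * (nat p + 1) + max (card A) (card B)"

lemma pair_size_commute: "pair_size A B = pair_size B A"
  unfolding pair_size_def by (simp add: min.commute max.commute)

lemma pair_size_less:
  assumes "A' \<subseteq> {0..<p}" "B' \<subseteq> {0..<p}"
    and "min (card A') (card B') < min (card A) (card B) \<or>
         min (card A') (card B') = min (card A) (card B) \<and> max (card A') (card B') < max (card A) (card B)"
  shows "pair_size A' B' < pair_size A B"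
proof -
  have "max (card A') (card B') < nat p + 1"
    using card_Zp_subset_le[OF assms(1)] card_Zp_subset_le[OF assms(2)] by simp
  moreover have "m' < m \<Longrightarrow> m' * (nat p + 1) + M' < m * (nat p + 1) + M"
    if "M' < nat p + 1" for m m' M M' :: nat
  proof -
    assume "m' < m"
    then have "(m' + 1) * (nat p + 1) \<le> m * (nat p + 1)" by (intro mult_le_mono1) simp
    then show ?thesis using that by (simp add: algebra_simps)
  qed
  ultimately show ?thesis using assms(3) unfolding pair_size_def by auto
qed

lemma vosper_step:
  assumes crit: "critical_pair A B" and le: "card B \<le> card A"
    and IH: "\<And>A' B'. critical_pair A' B' \<Longrightarrow> pair_size A' B' < pair_size A B \<Longrightarrow>
               is_arith_prog (sumset A' B')"
  shows "is_arith_prog (sumset A B)"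
proof -
  consider "card B = 2"
    | (transform) e where "2 \<le> card (A \<inter> translate e B)" "card (A \<inter> translate e B) < card B"
    | (rigid) "3 \<le> card B" "\<And>e. 2 \<le> card (A \<inter> translate e B) \<Longrightarrow> translate e B \<subseteq> A"
  proof (cases "card B = 2")
    case False
    then have three: "3 \<le> card B" using critical_pairD(4)[OF crit] by linarith
    show thesis
    proof (cases "\<exists>e. 2 \<le> card (A \<inter> translate e B) \<and> card (A \<inter> translate e B) < card B")
      case True
      then show thesis using that(2) by blast
    next
      case False
      then show thesis
        using that(3)[OF three] translate_subset_if_card_Int_ge[OF critical_pairD(2)[OF crit]]
        by (meson not_less)
    qed
  qed
  then show ?thesis
  proof cases
    case 1
    then show ?thesis using vosper_card_two[OF crit] by blast
  next
    case transform
    note T = e_transform_critical[OF crit transform(1)]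
    have "pair_size (A \<union> translate e B) {b \<in> B. (b + e) mod p \<in> A} < pair_size A B"
      using T(3,4) transform(2) le critical_pairD(1,2)[OF T(1)] by (intro pair_size_less) auto
    then show ?thesis using IH[OF T(1)] T(2) by simp
  next
    case rigid
    note R = rigid_critical_pair_reduce[OF crit le rigid]
    have "pair_size (translates_into B A) B < pair_size A B"
      using R(3) le critical_pairD(1,2)[OF R(1)] by (intro pair_size_less) auto
    then have "is_arith_prog A" using IH[OF R(1)] R(2) by simp
    then obtain a d where a: "A = arith_prog a d (card A)" unfolding is_arith_prog_def by blast
    have "is_arith_prog (sumset B A)"
      using critical_pairD[OF crit] sumset_commute[of A B]
      by (intro critical_sumset_arith_prog[of B "card A" a d, folded a]) auto
    then show ?thesis by (simp add: sumset_commute)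
  qed
qed

theorem vosper:
  assumes "critical_pair A B"
  shows "is_arith_prog (sumset A B)"
  using assms
proof (induction "pair_size A B" arbitrary: A B rule: less_induct)
  case (less A B)
  show ?case
  proof (cases "card B \<le> card A")
    case True
    then show ?thesis using vosper_step[OF less.prems] less.hyps by blast
  next
    case False
    have "is_arith_prog (sumset B A)"
      using vosper_step[of B A] less.prems less.hyps False
      by (simp add: critical_pair_commute pair_size_commute)
    then show ?thesis by (simp add: sumset_commute)
  qed
qed

lemma progression_if_translates_into_tight:
  assumes E: "E \<subseteq> {0..<p}" "card E + 2 \<le> nat p" and U: "U \<subseteq> E" "2 \<le> card U"
    and T: "2 \<le> card (translates_into U E)"
    and tight: "card (translates_into U E) + card U = card E + 1"
  shows "progression p E"
proof -
  let ?T = "translates_into U E"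
  have sub: "sumset ?T U \<subseteq> E" by (rule sumset_translates_into_subset)
  have "card ?T + card U \<le> card (sumset ?T U) + 1"
  proof (rule cauchy_davenport)
    show "?T \<subseteq> {0..<p}" "U \<subseteq> {0..<p}" using translates_into_subset_Zp U E by auto
    show "?T \<noteq> {}" "U \<noteq> {}" using T U(2) by auto
    show "sumset ?T U \<noteq> {0..<p}" using sub E by auto
  qed
  moreover have "card (sumset ?T U) \<le> card E" using card_mono[OF finite_Zp_subset[OF E(1)] sub] .
  ultimately have "card (sumset ?T U) = card E" using tight by linarith
  then have sum_eq: "sumset ?T U = E" using sub finite_Zp_subset[OF E(1)] by (simp add: card_subset_eq)
  have "critical_pair ?T U"
    unfolding critical_pair_def sum_eq using translates_into_subset_Zp U E T tight by auto
  then obtain a d where "E = arith_prog a d (card E)"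
    using vosper sum_eq unfolding is_arith_prog_def by metis
  then show ?thesis using progression_arith_prog by metis
qed

section \<open>Matching a basis into a sparse paving matroid\<close>

definition partners :: "int set \<Rightarrow> int set \<Rightarrow> int \<Rightarrow> int set" where
  "partners EM EN a = {b \<in> EN. (a + b) mod p \<notin> EM}"

lemma UN_partners:
  assumes "EN \<subseteq> {0..<p}"
  shows "(\<Union>a\<in>U. partners EM EN a) = EN - translates_into U EM"
proof (rule set_eqI)
  fix b
  have "translate b U \<subseteq> EM \<longleftrightarrow> (\<forall>a\<in>U. (a + b) mod p \<in> EM)" unfolding translate_def by blast
  then show "b \<in> (\<Union>a\<in>U. partners EM EN a) \<longleftrightarrow> b \<in> EN - translates_into U EM"
    using assms unfolding partners_def translates_into_def by auto
qed

lemma hall_condition_partners: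
  assumes EM: "EM \<subseteq> {0..<p}" "EM \<noteq> {0..<p}" and EN: "EN \<subseteq> {0..<p}" "0 \<notin> EN"
    and card_le: "card EM \<le> card EN" and S: "S \<subseteq> EM"
  shows "hall_condition S (partners EM EN)"
  unfolding hall_condition_def
proof (intro allI impI)
  fix J assume J: "J \<subseteq> S"
  show "card J \<le> card (\<Union>(partners EM EN ` J))"
  proof (cases "J = {}")
    case False
    let ?T = "translates_into J EM"
    have "card EN + 1 \<le> card (EN - ?T) + card ?T"
      using zero_mem_translates_into[of J EM] J S EM EN finite_Zp_subset translates_into_subset_Zp
      by (intro card_add_card_Diff_ge) auto
    moreover have "card ?T + card J \<le> card EM + 1"
      using card_translates_into_add_le[OF EM] J S False by blast
    ultimately show ?thesis using card_le UN_partners[OF EN(1)] by simp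
  qed simp
qed

lemma saturated_matching_is_basis:
  assumes EM: "EM \<subseteq> {0..<p}" "\<not> progression p EM"
    and N: "matroid_over_Zp p EN BsN" "has_rank BsN n" "0 \<notin> EN"
    and card_le: "card EM \<le> card EN"
    and S: "S \<subseteq> EM" "card S = n" "n > 0"
    and f: "inj_on f S" "f ` S \<subseteq> EN"
    and saturated: "(\<Union>a\<in>S. partners EM EN a) \<subseteq> f ` S"
  shows "f ` S \<in> BsN"
proof -
  let ?T = "translates_into S EM"
  have EN: "EN \<subseteq> {0..<p}" "is_matroid EN BsN" "loopless EN BsN"
    using N(1) unfolding matroid_over_Zp_def by auto
  have EM_small: "card EM + 2 \<le> nat p" using progression_if_card_ge[OF EM(1)] EM(2) by fastforce
  have card_X: "card (f ` S) = n" using f(1) S(2) by (simp add: card_image)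
  have "card EN + 1 \<le> card (EN - ?T) + card ?T"
    using zero_mem_translates_into[OF S(1) EM(1)] N(3) EN(1) finite_Zp_subset translates_into_subset_Zp
    by (intro card_add_card_Diff_ge) auto
  moreover have "card (EN - ?T) \<le> n"
    using saturated card_mono[of "f ` S"] card_X UN_partners[OF EN(1)] f(2) finite_Zp_subset EN(1)
    by (metis finite_imageI finite_subset)
  moreover have "card ?T + n \<le> card EM + 1"
    using card_translates_into_add_le[OF EM(1) _ S(1)] EM_small S(2,3) by fastforce
  ultimately have card_EN: "card EN = card EM" and card_T: "card ?T + n = card EM + 1"
    and "card (EN - ?T) = n"
    using card_le by linarith+
  then have EN_T: "EN - ?T = f ` S"
    using saturated UN_partners[OF EN(1)] card_X finite_Zp_subset[OF EN(1)]
    by (metis card_subset_eq finite_imageI finite_subset f(2))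
  have "0 < card ?T"
    using zero_mem_translates_into[OF S(1) EM(1)] finite_Zp_subset[OF translates_into_subset_Zp]
      card_gt_0_iff by blast
  then consider "n = 1" | "card ?T = 1" | "2 \<le> n" "2 \<le> card ?T"
    using S(3) by (cases "n = 1"; cases "card ?T = 1") auto
  then show ?thesis
  proof cases
    case 1
    then obtain a where "S = {a}" using S(2) card_1_singletonE by blast
    then have "f a \<in> EN" using f(2) by blast
    then obtain B where B: "B \<in> BsN" "f a \<in> B" using EN(3) unfolding loopless_def by blast
    then have "B = {f a}" using N(2) 1 unfolding has_rank_def by (metis card_1_singletonE singletonD)
    then show ?thesis using B(1) \<open>S = {a}\<close> by simp
  next
    case 2
    then obtain t where "?T = {t}" by (rule card_1_singletonE)
    then have "?T = {0}" using zero_mem_translates_into[OF S(1) EM(1)] by simp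
    then have "EN = f ` S" using EN_T N(3) by (metis Diff_empty Diff_insert0)
    moreover obtain B where B: "B \<in> BsN" using EN(2) unfolding is_matroid_def by blast
    moreover have "B \<subseteq> EN" "card B = card EN"
      using B EN(2) N(2) card_EN card_T 2 unfolding is_matroid_def has_rank_def by auto
    ultimately show ?thesis using finite_Zp_subset[OF EN(1)] by (metis card_subset_eq)
  next
    case 3
    then have "progression p EM"
      using progression_if_translates_into_tight[OF EM(1) EM_small S(1)] S(2) card_T by simp
    then show ?thesis using EM(2) by blast
  qed
qed

lemma exists_matched_basis:
  assumes EM: "EM \<subseteq> {0..<p}" "\<not> progression p EM"
    and N: "matroid_over_Zp p EN BsN" "sparse_paving EN BsN n" "has_rank BsN n" "0 \<notin> EN"
    and card_le: "card EM \<le> card EN"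
    and S: "S \<subseteq> EM" "card S = n" "n > 0"
  shows "\<exists>BN\<in>BsN. basis_matched p EM S BN"
proof -
  have EN: "EN \<subseteq> {0..<p}" "is_matroid EN BsN"
    using N(1) unfolding matroid_over_Zp_def by auto
  have "EM \<noteq> {0..<p}" using EM progression_if_card_ge by fastforce
  then have "has_sdr S (partners EM EN)"
    using hall_condition_partners[OF EM(1) _ EN(1) N(4) card_le S(1)] finite_Zp_subset EM(1) EN(1) S(1)
    by (intro hall_marriage) (auto simp: partners_def)
  then obtain f where f: "inj_on f S" "\<forall>a\<in>S. f a \<in> partners EM EN a"
    unfolding has_sdr_def by blast
  have f_EN: "f ` S \<subseteq> EN" using f(2) unfolding partners_def by blast
  have matched: "basis_matched p EM S X"
    if "bij_betw g S X" "\<forall>a\<in>S. g a \<in> partners EM EN a" for g X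
    using that unfolding basis_matched_def partners_def by blast
  show ?thesis
  proof (cases "f ` S \<in> BsN")
    case True
    then show ?thesis using matched[of f "f ` S"] f by (auto simp: bij_betw_def)
  next
    case not_basis: False
    then obtain a y where exchange: "a \<in> S" "y \<in> partners EM EN a" "y \<notin> f ` S"
      using saturated_matching_is_basis[OF EM N(1,3,4) card_le S f(1) f_EN] by blast
    have "insert y (f ` S - {f a}) \<in> BsN"
      using sparse_paving_basis_exchange[OF EN(2) N(3,2) f_EN, of "f a" y] f(1) S(2) exchange not_basis
      by (auto simp: card_image partners_def)
    moreover have "basis_matched p EM S (insert y (f ` S - {f a}))"
      using matched[OF bij_betw_fun_upd_exchange[OF f(1) exchange(1,3)]] f(2) exchange(2) by simp
    ultimately show ?thesis by blast
  qed
qed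

end

theorem corollary2p5:
  fixes p :: int and n :: nat
    and EM EN :: "int set" and BsM BsN :: "int set set"
  assumes "prime p"
    and "matroid_over_Zp p EM BsM" and "matroid_over_Zp p EN BsN"
    and "sparse_paving EN BsN n"
    and "has_rank BsM n" and "has_rank BsN n" and "n > 0"
    and "(\<not> progression p EM \<and> card EM = card EN - 1) \<or>
         (\<not> progression p EM \<and> \<not> semi_progression p EM \<and> card EM = card EN)"
    and "0 \<notin> EN"
  shows "matroid_matched p EM BsM BsN"
proof -
  interpret prime_modulus p by unfold_locales (rule assms(1))
  have EM: "EM \<subseteq> {0..<p}" "is_matroid EM BsM"
    using assms(2) unfolding matroid_over_Zp_def by auto
  have not_prog: "\<not> progression p EM" and card_le: "card EM \<le> card EN"
    using assms(8) by auto
  show ?thesis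
    unfolding matroid_matched_def
  proof
    fix S assume "S \<in> BsM"
    then have "S \<subseteq> EM" "card S = n"
      using EM(2) assms(5) unfolding is_matroid_def has_rank_def by auto
    then show "\<exists>BN\<in>BsN. basis_matched p EM S BN"
      using exists_matched_basis[OF EM(1) not_prog assms(3,4,6,9) card_le] assms(7) by blast
  qed
qed

end
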